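(* Let $|\phi_{ABC}\rangle$ be a pure three-qubit state. If at least one of the following holds: (i) $|\vec a|^2>\frac{|\vec b|^2+|\vec c|^2}{2}$ and $|\vec b|^2>\frac{|\vec a|^2+|\vec c|^2}{2}$; (ii) $|\vec a|^2>\frac{|\vec b|^2+|\vec c|^2}{2}$ and $|\vec c|^2>\frac{|\vec a|^2+|\vec b|^2}{2}$; (iii) $|\vec b|^2>\frac{|\vec a|^2+|\vec c|^2}{2}$ and $|\vec c|^2>\frac{|\vec a|^2+|\vec b|^2}{2}$, then $|\phi_{ABC}\rangle$ is genuinely tripartite entangled, i.e. it is not a product $|\chi\rangle\otimes|\eta\rangle$ with respect to any bipartition of the three qubits into one qubit versus the other two.
   Context: $\vec a,\vec b,\vec c\in\mathbb R^3$ are the Bloch vectors of the single-qubit reduced states of $|\phi_{ABC}\rangle$: $a_k=\mathrm{Tr}[\rho_A\sigma_k]$, $b_k=\mathrm{Tr}[\rho_B\sigma_k]$, $c_k=\mathrm{Tr}[\rho_C\sigma_k]$, with $\sigma_k$ the Pauli matrices. *)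

theory Defs
  imports Complex_Main
begin

text \<open>Qubit basis labels are booleans (False = |0>, True = |1>).
  A three-qubit state vector is a function psi a b c giving the amplitude
  of the basis vector |a b c> (qubits A, B, C in this order).\<close>

type_synonym qstate3 = "bool \<Rightarrow> bool \<Rightarrow> bool \<Rightarrow> complex"
type_synonym qmat = "bool \<Rightarrow> bool \<Rightarrow> complex"

definition pure_state3 :: "qstate3 \<Rightarrow> bool" where
  "pure_state3 psi \<longleftrightarrow> (\<Sum>a\<in>UNIV. \<Sum>b\<in>UNIV. \<Sum>c\<in>UNIV. (cmod (psi a b c))\<^sup>2) = 1"

definition rho_A :: "qstate3 \<Rightarrow> qmat" where
  "rho_A psi i j = (\<Sum>b\<in>UNIV. \<Sum>c\<in>UNIV. psi i b c * cnj (psi j b c))"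
definition rho_B :: "qstate3 \<Rightarrow> qmat" where
  "rho_B psi i j = (\<Sum>a\<in>UNIV. \<Sum>c\<in>UNIV. psi a i c * cnj (psi a j c))"
definition rho_C :: "qstate3 \<Rightarrow> qmat" where
  "rho_C psi i j = (\<Sum>a\<in>UNIV. \<Sum>b\<in>UNIV. psi a b i * cnj (psi a b j))"

definition pauli :: "nat \<Rightarrow> qmat" where
  "pauli k i j =
     (if k = 1 then (if i \<noteq> j then 1 else 0)
      else if k = 2 then (if i = j then 0 else if i then \<i> else - \<i>)
      else (if i \<noteq> j then 0 else if i then -1 else 1))"

definition mtrace :: "qmat \<Rightarrow> complex" where
  "mtrace M = (\<Sum>i\<in>UNIV. M i i)"

definition mmult :: "qmat \<Rightarrow> qmat \<Rightarrow> qmat" where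
  "mmult M N i j = (\<Sum>l\<in>UNIV. M i l * N l j)"

text \<open>Bloch vector components r_k = Tr[rho sigma_k] (real for Hermitian rho).\<close>
definition bloch :: "qmat \<Rightarrow> nat \<Rightarrow> real" where
  "bloch rho k = Re (mtrace (mmult rho (pauli k)))"

definition bloch_norm2 :: "qmat \<Rightarrow> real" where
  "bloch_norm2 rho = (\<Sum>k\<in>{1,2,3}. (bloch rho k)\<^sup>2)"

definition product_A_BC :: "qstate3 \<Rightarrow> bool" where
  "product_A_BC psi \<longleftrightarrow> (\<exists>chi eta. \<forall>a b c. psi a b c = chi a * eta b c)"
definition product_B_AC :: "qstate3 \<Rightarrow> bool" where
  "product_B_AC psi \<longleftrightarrow> (\<exists>chi eta. \<forall>a b c. psi a b c = chi b * eta a c)"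
definition product_C_AB :: "qstate3 \<Rightarrow> bool" where
  "product_C_AB psi \<longleftrightarrow> (\<exists>chi eta. \<forall>a b c. psi a b c = chi c * eta a b)"

definition genuinely_tripartite_entangled :: "qstate3 \<Rightarrow> bool" where
  "genuinely_tripartite_entangled psi \<longleftrightarrow>
     \<not> product_A_BC psi \<and> \<not> product_B_AC psi \<and> \<not> product_C_AB psi"

end

theory Submission imports Defs begin

text \<open>For a Hermitian 2x2 matrix the squared Bloch length is (tr rho)^2 - 4 det rho, and all
  reduced states of a pure state have trace 1. If psi = chi * eta across A|BC, then rho_A has
  rank one, so |a|^2 = 1, while rho_B and rho_C are |chi|^2 times eta eta^* and eta^T cnj eta,
  which share the determinant |chi|^4 |det eta|^2 >= 0. Hence |b|^2 = |c|^2 <= 1, contradicting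
  each of (i)-(iii). The other two bipartitions reduce to this one by relabelling the qubits.\<close>

lemma of_real_cmod_power2: "(complex_of_real (cmod z))\<^sup>2 = z * cnj z"
  by (metis complex_norm_square of_real_power)

definition mdet :: "qmat \<Rightarrow> complex" where
  "mdet M = M False False * M True True - M False True * M True False"

lemma bloch_norm2_eq_trace_det:
  assumes herm: "\<And>i j. rho j i = cnj (rho i j)"
  shows "complex_of_real (bloch_norm2 rho) = mtrace rho ^ 2 - 4 * mdet rho"
proof -
  obtain x0 where x0: "rho False False = of_real x0"
    using herm[of False False] by (metis Reals_cnj_iff Reals_cases)
  obtain x1 where x1: "rho True True = of_real x1"
    using herm[of True True] by (metis Reals_cnj_iff Reals_cases)
  have off_diag: "rho True False = cnj (rho False True)"
    using herm[of False True] by simp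
  show ?thesis
    unfolding bloch_norm2_def bloch_def mtrace_def mmult_def pauli_def mdet_def UNIV_bool
    by (simp add: x0 x1 off_diag complex_eq_iff power2_eq_square algebra_simps)
qed

lemma rho_A_hermitian: "rho_A psi j i = cnj (rho_A psi i j)"
  unfolding rho_A_def by (simp add: mult.commute)

lemma rho_B_hermitian: "rho_B psi j i = cnj (rho_B psi i j)"
  unfolding rho_B_def by (simp add: mult.commute)

lemma rho_C_hermitian: "rho_C psi j i = cnj (rho_C psi i j)"
  unfolding rho_C_def by (simp add: mult.commute)

lemma mtrace_reduced_pure_state3:
  assumes "pure_state3 psi"
  shows "mtrace (rho_A psi) = 1" and "mtrace (rho_B psi) = 1" and "mtrace (rho_C psi) = 1"
proof -
  have "(\<Sum>a\<in>UNIV. \<Sum>b\<in>UNIV. \<Sum>c\<in>UNIV. psi a b c * cnj (psi a b c)) = 1"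
    using arg_cong[OF assms[unfolded pure_state3_def], of complex_of_real]
    by (simp add: of_real_cmod_power2)
  then show "mtrace (rho_A psi) = 1" and "mtrace (rho_B psi) = 1" and "mtrace (rho_C psi) = 1"
    unfolding mtrace_def rho_A_def rho_B_def rho_C_def UNIV_bool by (simp_all add: algebra_simps)
qed

lemma mdet_reduced_product_A_BC:
  assumes prod: "\<And>a b c. psi a b c = chi a * eta b c"
  defines "D \<equiv> (\<Sum>a\<in>UNIV. (cmod (chi a))\<^sup>2)\<^sup>2
                * (cmod (eta False False * eta True True - eta False True * eta True False))\<^sup>2"
  shows "mdet (rho_A psi) = 0" and "mdet (rho_B psi) = of_real D" and "mdet (rho_C psi) = of_real D"
proof -
  show "mdet (rho_A psi) = 0"
    unfolding mdet_def rho_A_def UNIV_bool by (simp add: prod) algebra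
  show "mdet (rho_B psi) = of_real D" "mdet (rho_C psi) = of_real D"
    unfolding mdet_def rho_B_def rho_C_def D_def UNIV_bool
    by (simp_all add: prod of_real_cmod_power2) algebra+
qed

lemma bloch_norm2_reduced_product_A_BC:
  assumes pure: "pure_state3 psi" and "product_A_BC psi"
  shows "bloch_norm2 (rho_A psi) = 1 \<and> bloch_norm2 (rho_C psi) = bloch_norm2 (rho_B psi)
         \<and> bloch_norm2 (rho_B psi) \<le> 1"
proof -
  obtain chi eta where prod: "\<And>a b c. psi a b c = chi a * eta b c"
    using \<open>product_A_BC psi\<close> unfolding product_A_BC_def by blast
  define D where "D = (\<Sum>a\<in>UNIV. (cmod (chi a))\<^sup>2)\<^sup>2
                * (cmod (eta False False * eta True True - eta False True * eta True False))\<^sup>2"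
  note mdet = mdet_reduced_product_A_BC[OF prod]
  note trace = mtrace_reduced_pure_state3[OF pure]
  have "complex_of_real (bloch_norm2 (rho_A psi)) = 1"
    by (simp add: bloch_norm2_eq_trace_det[OF rho_A_hermitian] trace mdet)
  moreover have "complex_of_real (bloch_norm2 (rho_B psi)) = of_real (1 - 4 * D)"
    by (simp add: bloch_norm2_eq_trace_det[OF rho_B_hermitian] trace mdet D_def)
  moreover have "complex_of_real (bloch_norm2 (rho_C psi)) = of_real (1 - 4 * D)"
    by (simp add: bloch_norm2_eq_trace_det[OF rho_C_hermitian] trace mdet D_def)
  moreover have "D \<ge> 0"
    unfolding D_def by simp
  ultimately show ?thesis
    unfolding of_real_eq_iff of_real_eq_1_iff by simp
qed

lemma bloch_norm2_reduced_product_B_AC: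
  assumes "pure_state3 psi" and "product_B_AC psi"
  shows "bloch_norm2 (rho_B psi) = 1 \<and> bloch_norm2 (rho_C psi) = bloch_norm2 (rho_A psi)
         \<and> bloch_norm2 (rho_A psi) \<le> 1"
proof -
  define q where "q = (\<lambda>a b c. psi b a c)"
  have "pure_state3 q"
    using assms(1) unfolding pure_state3_def q_def UNIV_bool by simp
  moreover have "product_A_BC q"
    using assms(2) unfolding product_A_BC_def product_B_AC_def q_def by blast
  moreover have "rho_A q = rho_B psi" "rho_B q = rho_A psi" "rho_C q = rho_C psi"
    unfolding rho_A_def rho_B_def rho_C_def q_def UNIV_bool by (auto simp: fun_eq_iff)
  ultimately show ?thesis
    using bloch_norm2_reduced_product_A_BC by metis
qed

lemma bloch_norm2_reduced_product_C_AB: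
  assumes "pure_state3 psi" and "product_C_AB psi"
  shows "bloch_norm2 (rho_C psi) = 1 \<and> bloch_norm2 (rho_B psi) = bloch_norm2 (rho_A psi)
         \<and> bloch_norm2 (rho_A psi) \<le> 1"
proof -
  define q where "q = (\<lambda>a b c. psi b c a)"
  have "pure_state3 q"
    using assms(1) unfolding pure_state3_def q_def UNIV_bool by simp
  moreover have "product_A_BC q"
    using assms(2) unfolding product_A_BC_def product_C_AB_def q_def by blast
  moreover have "rho_A q = rho_C psi" "rho_B q = rho_A psi" "rho_C q = rho_B psi"
    unfolding rho_A_def rho_B_def rho_C_def q_def UNIV_bool by (auto simp: fun_eq_iff)
  ultimately show ?thesis
    using bloch_norm2_reduced_product_A_BC by metis
qed

theorem theorem9:
  fixes psi :: qstate3
  assumes "pure_state3 psi"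
  defines "a2 \<equiv> bloch_norm2 (rho_A psi)"
      and "b2 \<equiv> bloch_norm2 (rho_B psi)"
      and "c2 \<equiv> bloch_norm2 (rho_C psi)"
  assumes "(a2 > (b2 + c2) / 2 \<and> b2 > (a2 + c2) / 2)
         \<or> (a2 > (b2 + c2) / 2 \<and> c2 > (a2 + b2) / 2)
         \<or> (b2 > (a2 + c2) / 2 \<and> c2 > (a2 + b2) / 2)"
  shows "genuinely_tripartite_entangled psi"
  unfolding genuinely_tripartite_entangled_def
proof (intro conjI notI)
  assume "product_A_BC psi"
  with assms(1,5) show False
    using bloch_norm2_reduced_product_A_BC unfolding a2_def b2_def c2_def by fastforce
next
  assume "product_B_AC psi"
  with assms(1,5) show False
    using bloch_norm2_reduced_product_B_AC unfolding a2_def b2_def c2_def by fastforce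
next
  assume "product_C_AB psi"
  with assms(1,5) show False
    using bloch_norm2_reduced_product_C_AB unfolding a2_def b2_def c2_def by fastforce
qed

end
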